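(* Let $X\subset\mathbb R^n$, let $\alpha:[0,1]\to X$ be a parametrization of a line segment, and let $\beta:[0,1]\to X$ be any path with $\beta(0)=\alpha(0)$ and $\beta(1)=\alpha(1)$. Then $o(\alpha,(P,Q))\le o(\beta,(P,Q))$ for every pair $(P,Q)$ of distinct parallel hyperplanes. If in addition $\beta$ is not a reparametrization of $\alpha$, then there exists such a pair $(P,Q)$ with $o(\alpha,(P,Q))<o(\beta,(P,Q))$.
   Context: Let $g:\mathbb R^n\to[-1,1]$ depend only on $x_1$: $g=-1$ if $x_1\le-3$, $\frac12(x_1+1)$ if $-3\le x_1\le-1$, $0$ if $-1\le x_1\le1$, $\frac12(x_1-1)$ if $1\le x_1\le3$, $1$ if $x_1\ge3$. For distinct parallel hyperplanes $(P,Q)$, $g_{(P,Q)}=g\circ h_{(P,Q)}$ where $h_{(P,Q)}$ is a composition of a dilation, a rotation and a translation sending $P$ to $\{x_1=-3\}$ and $Q$ to $\{x_1=3\}$. For continuous $f:[a,b]\to\mathbb R^n$, the oscillation $o(f,(P,Q))$ is the supremum of $-\sum_{i=1}^k g_{(P,Q)}(f(a_{i-1}))g_{(P,Q)}(f(a_i))$ over finite collections $a\le a_0\le\dots\le a_k\le b$ (empty sums $=0$). *)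

theory Defs
  imports "HOL-Analysis.Analysis"
begin

definition g1 :: "real \<Rightarrow> real" where
  "g1 s = (if s \<le> -3 then -1
           else if s \<le> -1 then (s + 1) / 2
           else if s \<le> 1 then 0
           else if s \<le> 3 then (s - 1) / 2
           else 1)"

definition first_axis :: "'a::euclidean_space" where
  "first_axis = (SOME b. b \<in> Basis)"

definition g_fun :: "'a::euclidean_space \<Rightarrow> real" where
  "g_fun x = g1 (x \<bullet> first_axis)"

definition distinct_parallel_hyperplanes :: "'a::euclidean_space set \<Rightarrow> 'a set \<Rightarrow> bool" where
  "distinct_parallel_hyperplanes P Q \<longleftrightarrow>
     (\<exists>a c d. a \<noteq> 0 \<and> c \<noteq> d \<and> P = {x. a \<bullet> x = c} \<and> Q = {x. a \<bullet> x = d})"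

definition similarity_map :: "('a::euclidean_space \<Rightarrow> 'a) \<Rightarrow> bool" where
  "similarity_map h \<longleftrightarrow>
     (\<exists>r R t. r > 0 \<and> orthogonal_transformation R \<and> h = (\<lambda>x. t + r *\<^sub>R R x))"

definition h_PQ :: "'a::euclidean_space set \<Rightarrow> 'a set \<Rightarrow> 'a \<Rightarrow> 'a" where
  "h_PQ P Q = (SOME h. similarity_map h \<and>
                  h ` P = {y. y \<bullet> first_axis = -3} \<and> h ` Q = {y. y \<bullet> first_axis = 3})"

definition g_PQ :: "'a::euclidean_space set \<Rightarrow> 'a set \<Rightarrow> 'a \<Rightarrow> real" where
  "g_PQ P Q = g_fun \<circ> h_PQ P Q"

definition oscillation ::
  "(real \<Rightarrow> 'a::euclidean_space) \<Rightarrow> real \<Rightarrow> real \<Rightarrow> 'a set \<Rightarrow> 'a set \<Rightarrow> ereal" where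
  "oscillation f a b P Q =
     (SUP kt \<in> {(k::nat, t::nat \<Rightarrow> real). a \<le> t 0 \<and> (\<forall>i<k. t i \<le> t (Suc i)) \<and> t k \<le> b}.
        ereal (- (\<Sum>i\<in>{1..fst kt}. g_PQ P Q (f (snd kt (i - 1))) * g_PQ P Q (f (snd kt i)))))"

definition reparametrization_of :: "(real \<Rightarrow> 'a) \<Rightarrow> (real \<Rightarrow> 'a) \<Rightarrow> bool" where
  "reparametrization_of \<beta> \<alpha> \<longleftrightarrow>
     (\<exists>\<phi>. continuous_on {0..1} \<phi> \<and> mono_on {0..1} \<phi> \<and> \<phi> ` {0..1} \<subseteq> {0..1} \<and>
          \<phi> 0 = 0 \<and> \<phi> 1 = 1 \<and> (\<forall>t\<in>{0..1}. \<beta> t = \<alpha> (\<phi> t)))"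

end

(*
  Writing P = {x. a \<bullet> x = c} and Q = {x. a \<bullet> x = d}, every admissible similarity h(P,Q) has
  first coordinate -3 + 6 (a \<bullet> x - c) / (d - c), so g(P,Q) is g composed with an affine
  function and is therefore monotone along every line. Along the segment \<alpha> it is hence
  monotone in time, and for a monotone sequence v at most one product v(i-1) v(i) is negative,
  which bounds the oscillation of \<alpha> by max 0 (-g(\<alpha> 0) g(\<alpha> 1)). The partition {0, 1} of \<beta>
  already attains this value. If \<beta> is not a reparametrization of \<alpha>, then either \<beta> leaves the
  segment, and hyperplanes separating the segment from that point give oscillations 0 and at
  least 1, or the position of \<beta> along the segment goes back between times s \<le> u, and
  hyperplanes through these two positions give oscillations at most 1 and at least 3.
*)

theory Submission
  imports Defs
begin

section \<open>Explicit form of g(P,Q)\<close>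

lemma first_axis_in_Basis: "(first_axis::'a::euclidean_space) \<in> Basis"
  unfolding first_axis_def by (rule someI_ex) (use nonempty_Basis in blast)

lemma inner_first_axis_self: "(first_axis::'a::euclidean_space) \<bullet> first_axis = 1"
  using first_axis_in_Basis by (metis inner_Basis)

definition reflection :: "'a::real_inner \<Rightarrow> 'a \<Rightarrow> 'a" where
  "reflection v x = x - (2 * (x \<bullet> v) / (v \<bullet> v)) *\<^sub>R v"

lemma orthogonal_transformation_reflection: "orthogonal_transformation (reflection v)"
  unfolding orthogonal_transformation_def
proof
  show "linear (reflection v)"
    unfolding reflection_def
    by (rule linearI) (simp_all add: inner_add_left add_divide_distrib algebra_simps scaleR_add_left)
  show "\<forall>x y. reflection v x \<bullet> reflection v y = x \<bullet> y"
    by (cases "v = 0")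
       (simp_all add: reflection_def inner_diff_left inner_diff_right algebra_simps inner_commute)
qed

lemma reflection_swap:
  assumes "u \<bullet> u = e \<bullet> e"
  shows "reflection (u - e) u = e"
proof (cases "u = e")
  case False
  have norm_diff: "(u - e) \<bullet> (u - e) = 2 * (u \<bullet> (u - e))"
    using assms by (simp add: inner_diff_left inner_diff_right inner_commute)
  have "(u - e) \<bullet> (u - e) \<noteq> 0"
    using False by simp
  then have "2 * (u \<bullet> (u - e)) / ((u - e) \<bullet> (u - e)) = 1"
    by (metis norm_diff divide_self)
  then have "reflection (u - e) u = u - 1 *\<^sub>R (u - e)"
    unfolding reflection_def by (simp only:)
  then show ?thesis
    by simp
qed (simp add: reflection_def)

lemma similarity_map_surj:
  assumes "similarity_map h"
  shows "surj h"
proof -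
  obtain r R t where "r > 0" "orthogonal_transformation R" and h: "h = (\<lambda>x. t + r *\<^sub>R R x)"
    using assms unfolding similarity_map_def by blast
  then have "h (inv R ((y - t) /\<^sub>R r)) = y" for y
    by (simp add: orthogonal_transformation_surj surj_f_inv_f)
  then show ?thesis
    by (metis surj_def)
qed

lemma similarity_map_onto_slab:
  fixes a :: "'a::euclidean_space"
  assumes a: "a \<noteq> 0" and cd: "c \<noteq> d"
  obtains h where "similarity_map h"
    "h ` {x. a \<bullet> x = c} = {y. y \<bullet> first_axis = -3}"
    "h ` {x. a \<bullet> x = d} = {y. y \<bullet> first_axis = 3}"
proof -
  define e :: 'a where "e = first_axis"
  define \<sigma> where "\<sigma> = 6 / (d - c)"
  have \<sigma>: "\<sigma> \<noteq> 0" "\<sigma> * d = \<sigma> * c + 6"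
    using cd by (simp_all add: \<sigma>_def field_simps)
  define u where "u = (sgn \<sigma> / norm a) *\<^sub>R a"
  define R where "R = reflection (u - e)"
  define r where "r = \<bar>\<sigma>\<bar> * norm a"
  define \<kappa> where "\<kappa> = -3 - \<sigma> * c"
  define h where "h x = \<kappa> *\<^sub>R e + r *\<^sub>R R x" for x
  \<comment> \<open>\<open>R\<close> turns the normal \<open>a\<close> into a multiple of \<open>e\<close>, so \<open>h x \<bullet> e\<close> is affine in \<open>a \<bullet> x\<close> with slope \<open>\<sigma>\<close>\<close>
  have "u \<bullet> u = e \<bullet> e"
    using a \<sigma> by (simp add: u_def e_def sgn_if dot_square_norm norm_Basis first_axis_in_Basis)
  then have Ru: "R u = e"
    unfolding R_def by (rule reflection_swap)
  have R: "orthogonal_transformation R"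
    unfolding R_def by (rule orthogonal_transformation_reflection)
  have "similarity_map h"
    unfolding similarity_map_def using a \<sigma> R
    by (intro exI[of _ r] exI[of _ R] exI[of _ "\<kappa> *\<^sub>R e"]) (simp add: h_def[abs_def] r_def)
  have first_coord: "h x \<bullet> e = \<kappa> + \<sigma> * (a \<bullet> x)" for x
  proof -
    have "R x \<bullet> e = x \<bullet> u"
      using R Ru unfolding orthogonal_transformation_def by metis
    then have "r * (R x \<bullet> e) = \<sigma> * (a \<bullet> x)"
      using a by (simp add: r_def u_def inner_commute) (metis abs_mult_sgn mult.commute)
    then show ?thesis
      by (simp add: h_def inner_add_left e_def inner_first_axis_self)
  qed
  have "h ` {x. a \<bullet> x = c'} = {y. y \<bullet> e = \<kappa> + \<sigma> * c'}" for c'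
  proof -
    have "{x. a \<bullet> x = c'} = h -` {y. y \<bullet> e = \<kappa> + \<sigma> * c'}"
      using first_coord \<sigma> by auto
    then show ?thesis
      using surj_image_vimage_eq[OF similarity_map_surj[OF \<open>similarity_map h\<close>]] by (simp only:)
  qed
  moreover have "\<kappa> + \<sigma> * c = -3" "\<kappa> + \<sigma> * d = 3"
    using \<sigma>(2) unfolding \<kappa>_def by (simp_all add: algebra_simps)
  ultimately show thesis
    using that \<open>similarity_map h\<close> unfolding e_def by metis
qed

lemma similarity_map_first_coordinate:
  fixes a :: "'a::euclidean_space"
  assumes a: "a \<noteq> 0" and cd: "c \<noteq> d" and "similarity_map h"
    and hP: "h ` {x. a \<bullet> x = c} = {y. y \<bullet> first_axis = -3}"
    and hQ: "h ` {x. a \<bullet> x = d} = {y. y \<bullet> first_axis = 3}"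
  shows "h x \<bullet> first_axis = -3 + 6 * (a \<bullet> x - c) / (d - c)"
proof -
  obtain r R t where "orthogonal_transformation R" and h: "h = (\<lambda>x. t + r *\<^sub>R R x)"
    using \<open>similarity_map h\<close> unfolding similarity_map_def by blast
  then have "linear R"
    by (simp add: orthogonal_transformation_def)
  \<comment> \<open>\<open>h\<close> is affine, so its first coordinate moves with slope \<open>W\<close> along \<open>a\<close>; \<open>P\<close> and \<open>Q\<close> fix \<open>W\<close>\<close>
  define W where "W = r * (R a \<bullet> first_axis)"
  have affine: "h (y + s *\<^sub>R a) \<bullet> first_axis = h y \<bullet> first_axis + s * W" for y s
    using \<open>linear R\<close> by (simp add: h W_def linear_add linear_scale inner_add_left algebra_simps)
  have aa: "a \<bullet> a \<noteq> 0"
    using a by simp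
  define s where "s = (a \<bullet> x - c) / (a \<bullet> a)"
  define p where "p = x - s *\<^sub>R a"
  have "a \<bullet> p = c"
    using aa by (simp add: p_def s_def inner_diff_right)
  then have hp: "h p \<bullet> first_axis = -3"
    using hP by blast
  have "a \<bullet> (p + ((d - c) / (a \<bullet> a)) *\<^sub>R a) = d"
    using aa \<open>a \<bullet> p = c\<close> by (simp add: inner_add_right)
  then have "h (p + ((d - c) / (a \<bullet> a)) *\<^sub>R a) \<bullet> first_axis = 3"
    using hQ by blast
  then have W: "W = 6 * (a \<bullet> a) / (d - c)"
    using affine[of p] hp aa cd by (simp add: field_simps)
  have "h x \<bullet> first_axis = -3 + s * W"
    using affine[of p s] hp by (simp add: p_def)
  also have "\<dots> = -3 + 6 * (a \<bullet> x - c) / (d - c)"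
    using aa cd by (simp add: W s_def field_simps)
  finally show ?thesis .
qed

lemma g_PQ_hyperplanes:
  fixes a :: "'a::euclidean_space"
  assumes "a \<noteq> 0" "c \<noteq> d"
  shows "g_PQ {x. a \<bullet> x = c} {x. a \<bullet> x = d} x = g1 (-3 + 6 * (a \<bullet> x - c) / (d - c))"
proof -
  let ?P = "{x. a \<bullet> x = c}" and ?Q = "{x. a \<bullet> x = d}"
  have "\<exists>h. similarity_map h \<and> h ` ?P = {y. y \<bullet> first_axis = -3} \<and> h ` ?Q = {y. y \<bullet> first_axis = 3}"
    using similarity_map_onto_slab[OF assms] by metis
  then have "similarity_map (h_PQ ?P ?Q) \<and> h_PQ ?P ?Q ` ?P = {y. y \<bullet> first_axis = -3}
      \<and> h_PQ ?P ?Q ` ?Q = {y. y \<bullet> first_axis = 3}"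
    unfolding h_PQ_def by (rule someI_ex)
  then show ?thesis
    unfolding g_PQ_def g_fun_def using similarity_map_first_coordinate[OF assms] by simp
qed

lemma g1_mono: "mono g1"
  unfolding g1_def by (rule monoI) (auto simp: field_simps)

lemma g1_le_minus_three: "s \<le> -3 \<Longrightarrow> g1 s = -1"
  unfolding g1_def by auto

lemma g1_ge_three: "3 \<le> s \<Longrightarrow> g1 s = 1"
  unfolding g1_def by auto

lemma g_PQ_hyperplanes_below:
  fixes a :: "'a::euclidean_space"
  assumes "a \<noteq> 0" "c < d" "a \<bullet> z \<le> c"
  shows "g_PQ {x. a \<bullet> x = c} {x. a \<bullet> x = d} z = -1"
proof -
  have "6 * (a \<bullet> z - c) / (d - c) \<le> 0"
    using assms by (simp add: divide_nonpos_pos)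
  then show ?thesis
    using assms by (simp add: g_PQ_hyperplanes g1_le_minus_three)
qed

lemma g_PQ_hyperplanes_above:
  fixes a :: "'a::euclidean_space"
  assumes "a \<noteq> 0" "c < d" "d \<le> a \<bullet> z"
  shows "g_PQ {x. a \<bullet> x = c} {x. a \<bullet> x = d} z = 1"
proof -
  have "6 \<le> 6 * (a \<bullet> z - c) / (d - c)"
    using assms by (simp add: le_divide_eq)
  then show ?thesis
    using assms by (simp add: g_PQ_hyperplanes g1_ge_three)
qed

lemma g_PQ_monotone_on_line:
  fixes A D :: "'a::euclidean_space"
  assumes "distinct_parallel_hyperplanes P Q"
  shows "mono (\<lambda>m. g_PQ P Q (A + m *\<^sub>R D)) \<or> antimono (\<lambda>m. g_PQ P Q (A + m *\<^sub>R D))"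
proof -
  obtain a c d where "a \<noteq> 0" "c \<noteq> d" and PQ: "P = {x. a \<bullet> x = c}" "Q = {x. a \<bullet> x = d}"
    using assms unfolding distinct_parallel_hyperplanes_def by blast
  define K where "K = 6 * (a \<bullet> D) / (d - c)"
  define L where "L = -3 + 6 * (a \<bullet> A - c) / (d - c)"
  have line: "g_PQ P Q (A + m *\<^sub>R D) = g1 (L + m * K)" for m
  proof -
    have "6 * (a \<bullet> (A + m *\<^sub>R D) - c) / (d - c) = 6 * (a \<bullet> A - c) / (d - c) + m * K"
      by (simp add: K_def inner_add_right add_divide_distrib[symmetric] algebra_simps)
    then show ?thesis
      unfolding PQ g_PQ_hyperplanes[OF \<open>a \<noteq> 0\<close> \<open>c \<noteq> d\<close>] L_def by (simp add: ac_simps)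
  qed
  show ?thesis
  proof (cases "0 \<le> K")
    case True
    then have "mono (\<lambda>m. g1 (L + m * K))"
      by (intro monoI monoD[OF g1_mono]) (simp add: mult_right_mono)
    then show ?thesis
      unfolding line by blast
  next
    case False
    then have "antimono (\<lambda>m. g1 (L + m * K))"
      by (intro antimonoI monoD[OF g1_mono]) (simp add: mult_right_mono_neg)
    then show ?thesis
      unfolding line by blast
  qed
qed

section \<open>Bounds on the oscillation\<close>

lemma monotone_chain_sum_bound:
  fixes v :: "nat \<Rightarrow> real"
  assumes "\<forall>i<k. v i \<le> v (Suc i)" "lo \<le> v 0" "v k \<le> hi"
  shows "- (\<Sum>i\<in>{1..k}. v (i - 1) * v i) \<le> max 0 (- (lo * hi))"
  using assms
proof (induction k arbitrary: hi)
  case (Suc k)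
  have prefix: "\<forall>i<k. v i \<le> v (Suc i)" and step: "v k \<le> v (Suc k)" "v (Suc k) \<le> hi"
    using Suc.prems by auto
  have "v 0 \<le> v k"
    by (rule lift_Suc_mono_le_ivl[where N = "{..<k}"]) (use prefix in auto)
  have sum: "- (\<Sum>i\<in>{1..Suc k}. v (i - 1) * v i) = - (\<Sum>i\<in>{1..k}. v (i - 1) * v i) - v k * v (Suc k)"
    by simp
  show ?case
  proof (cases "0 \<le> v k")
    case True
    then have "0 \<le> v k * v (Suc k)"
      using step by simp
    moreover have "- (\<Sum>i\<in>{1..k}. v (i - 1) * v i) \<le> max 0 (- (lo * hi))"
      using Suc.IH[OF prefix \<open>lo \<le> v 0\<close>] step by simp
    ultimately show ?thesis
      using sum by linarith
  next
    case False
    \<comment> \<open>then \<open>v\<close> is negative up to index \<open>k\<close>, so all earlier products are positive\<close>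
    then have "lo < 0"
      using \<open>v 0 \<le> v k\<close> \<open>lo \<le> v 0\<close> by simp
    then have "0 < lo * v k"
      using False by (simp add: mult_neg_neg)
    then have "- (\<Sum>i\<in>{1..k}. v (i - 1) * v i) \<le> 0"
      using Suc.IH[OF prefix \<open>lo \<le> v 0\<close> order_refl] by simp
    moreover have "- (v k * v (Suc k)) \<le> max 0 (- (lo * hi))"
    proof (cases "v (Suc k) \<le> 0")
      case True
      then have "0 \<le> v k * v (Suc k)"
        using False by (simp add: mult_nonpos_nonpos)
      then show ?thesis
        by linarith
    next
      case positive: False
      have "- (v k * v (Suc k)) \<le> - (lo * v (Suc k))"
        using \<open>v 0 \<le> v k\<close> \<open>lo \<le> v 0\<close> positive by (simp add: mult_right_mono)
      also have "\<dots> \<le> - (lo * hi)"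
        using \<open>lo < 0\<close> step by (simp add: mult_left_mono_neg)
      finally show ?thesis
        by simp
    qed
    ultimately show ?thesis
      using sum by linarith
  qed
qed simp

lemma chain_sum_bound_of_mono_on:
  fixes w :: "real \<Rightarrow> real" and t :: "nat \<Rightarrow> real"
  assumes w: "mono_on {0..1} w" and t: "0 \<le> t 0" "\<forall>i<k. t i \<le> t (Suc i)" "t k \<le> 1"
  shows "- (\<Sum>i\<in>{1..k}. w (t (i - 1)) * w (t i)) \<le> max 0 (- (w 0 * w 1))"
proof -
  have t_le: "t i \<le> t j" if "i \<le> j" "j \<le> k" for i j
    by (rule lift_Suc_mono_le_ivl[where N = "{..<k}"]) (use t(2) that in auto)
  have t_in: "t i \<in> {0..1}" if "i \<le> k" for i
    using t(1,3) t_le[of 0 i] t_le[of i k] that by auto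
  have "\<forall>i<k. w (t i) \<le> w (t (Suc i))"
    using t_in t(2) by (auto intro!: mono_onD[OF w])
  moreover have "w 0 \<le> w (t 0)" "w (t k) \<le> w 1"
    using t_in[of 0] t_in[of k] by (auto intro!: mono_onD[OF w])
  ultimately show ?thesis
    using monotone_chain_sum_bound[of k "w \<circ> t" "w 0" "w 1"] by simp
qed

lemma oscillation_le_if_monotone:
  assumes "mono_on {0..1} (\<lambda>s. g_PQ P Q (f s)) \<or> antimono_on {0..1} (\<lambda>s. g_PQ P Q (f s))"
  shows "oscillation f 0 1 P Q \<le> ereal (max 0 (- (g_PQ P Q (f 0) * g_PQ P Q (f 1))))"
proof -
  \<comment> \<open>the oscillation only sees products of values, which do not change under negation\<close>
  obtain w where w: "mono_on {0..1} w" and prod: "\<And>s u. g_PQ P Q (f s) * g_PQ P Q (f u) = w s * w u"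
  proof (cases "mono_on {0..1} (\<lambda>s. g_PQ P Q (f s))")
    case False
    then have "mono_on {0..1} (\<lambda>s. - g_PQ P Q (f s))"
      using assms by (auto intro!: mono_onI dest: monotone_onD)
    then show thesis
      using that by simp
  qed (use that in simp)
  show ?thesis
    unfolding oscillation_def
    using chain_sum_bound_of_mono_on[OF w] by (auto intro!: SUP_least simp: prod simp del: ereal_max)
qed

lemma oscillation_ge_chain:
  assumes "0 \<le> t 0" "\<forall>i<k. t i \<le> t (Suc i)" "t k \<le> 1"
  shows "ereal (- (\<Sum>i\<in>{1..k}. g_PQ P Q (f (t (i - 1))) * g_PQ P Q (f (t i)))) \<le> oscillation f 0 1 P Q"
  unfolding oscillation_def by (rule SUP_upper2[of "(k, t)"]) (use assms in auto)

lemma oscillation_ge_two_points: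
  assumes "0 \<le> s" "s \<le> u" "u \<le> 1"
  shows "ereal (- (g_PQ P Q (f s) * g_PQ P Q (f u))) \<le> oscillation f 0 1 P Q"
  using oscillation_ge_chain[of "\<lambda>i. if i = 0 then s else u" 1 P Q f] assms by simp

lemma oscillation_ge_endpoints:
  "ereal (max 0 (- (g_PQ P Q (f 0) * g_PQ P Q (f 1)))) \<le> oscillation f 0 1 P Q"
  using oscillation_ge_chain[of "\<lambda>_. 0" 0 P Q f] oscillation_ge_two_points[of 0 1 P Q f]
  by (simp add: zero_ereal_def)

lemma oscillation_ge_four_points:
  assumes "0 \<le> s\<^sub>1" "s\<^sub>1 \<le> s\<^sub>2" "s\<^sub>2 \<le> s\<^sub>3" "s\<^sub>3 \<le> s\<^sub>4" "s\<^sub>4 \<le> 1"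
  shows "ereal (- (g_PQ P Q (f s\<^sub>1) * g_PQ P Q (f s\<^sub>2) + g_PQ P Q (f s\<^sub>2) * g_PQ P Q (f s\<^sub>3)
           + g_PQ P Q (f s\<^sub>3) * g_PQ P Q (f s\<^sub>4))) \<le> oscillation f 0 1 P Q"
proof -
  define t where "t = (\<lambda>i::nat. [s\<^sub>1, s\<^sub>2, s\<^sub>3, s\<^sub>4] ! i)"
  have "\<forall>i<3. t i \<le> t (Suc i)"
    using assms by (auto simp: t_def less_Suc_eq numeral_3_eq_3)
  then show ?thesis
    using oscillation_ge_chain[of t 3 P Q f] assms by (simp add: t_def numeral_3_eq_3 add.assoc)
qed

section \<open>Separating pairs of hyperplanes\<close>

lemma exists_hyperplanes_separating_point:
  fixes z :: "'a::euclidean_space"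
  assumes "convex S" "closed S" "S \<noteq> {}" "z \<notin> S"
  obtains P Q where "distinct_parallel_hyperplanes P Q"
    "\<And>x. x \<in> S \<Longrightarrow> g_PQ P Q x = -1" "g_PQ P Q z = 1"
proof -
  obtain a b where ab: "a \<bullet> z < b" "\<And>x. x \<in> S \<Longrightarrow> b < a \<bullet> x"
    using separating_hyperplane_closed_point[OF assms(1,2,4)] by blast
  obtain x where "x \<in> S"
    using \<open>S \<noteq> {}\<close> by blast
  then have "a \<bullet> z < a \<bullet> x"
    using ab by (meson less_trans)
  then have "- a \<noteq> 0"
    by auto
  let ?P = "{x. - a \<bullet> x = - b}" and ?Q = "{x. - a \<bullet> x = - a \<bullet> z}"
  show thesis
  proof
    show "distinct_parallel_hyperplanes ?P ?Q"
      unfolding distinct_parallel_hyperplanes_def using \<open>- a \<noteq> 0\<close> ab(1)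
      by (intro exI[of _ "- a"] exI[of _ "- b"] exI[of _ "- a \<bullet> z"]) simp
    show "g_PQ ?P ?Q x = -1" if "x \<in> S" for x
      by (rule g_PQ_hyperplanes_below[OF \<open>- a \<noteq> 0\<close>]) (use ab(1) ab(2)[OF that] in simp_all)
    show "g_PQ ?P ?Q z = 1"
      by (rule g_PQ_hyperplanes_above[OF \<open>- a \<noteq> 0\<close>]) (use ab in simp_all)
  qed
qed

lemma exists_hyperplanes_separating_on_line:
  fixes A D :: "'a::euclidean_space"
  assumes "D \<noteq> 0" "y < x"
  obtains P Q where "distinct_parallel_hyperplanes P Q"
    "\<And>m. m \<le> y \<Longrightarrow> g_PQ P Q (A + m *\<^sub>R D) = -1"
    "\<And>m. x \<le> m \<Longrightarrow> g_PQ P Q (A + m *\<^sub>R D) = 1"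
proof -
  have DD: "0 < D \<bullet> D"
    using assms(1) by simp
  have coord: "D \<bullet> (A + m *\<^sub>R D) = D \<bullet> A + m * (D \<bullet> D)" for m
    by (simp add: inner_add_right)
  let ?P = "{z. D \<bullet> z = D \<bullet> A + y * (D \<bullet> D)}" and ?Q = "{z. D \<bullet> z = D \<bullet> A + x * (D \<bullet> D)}"
  have lt: "D \<bullet> A + y * (D \<bullet> D) < D \<bullet> A + x * (D \<bullet> D)"
    using DD assms(2) by simp
  show thesis
  proof
    show "distinct_parallel_hyperplanes ?P ?Q"
      unfolding distinct_parallel_hyperplanes_def using assms(1) lt
      by (intro exI[of _ D] exI[of _ "D \<bullet> A + y * (D \<bullet> D)"] exI[of _ "D \<bullet> A + x * (D \<bullet> D)"]) simp
    show "g_PQ ?P ?Q (A + m *\<^sub>R D) = -1" if "m \<le> y" for m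
      by (rule g_PQ_hyperplanes_below[OF assms(1) lt]) (use DD that in \<open>simp add: coord mult_right_mono\<close>)
    show "g_PQ ?P ?Q (A + m *\<^sub>R D) = 1" if "x \<le> m" for m
      by (rule g_PQ_hyperplanes_above[OF assms(1) lt]) (use DD that in \<open>simp add: coord mult_right_mono\<close>)
  qed
qed

section \<open>Arcs onto a segment\<close>

definition segment_coord :: "'a::real_inner \<Rightarrow> 'a \<Rightarrow> 'a \<Rightarrow> real" where
  "segment_coord A B x = ((x - A) \<bullet> (B - A)) / ((B - A) \<bullet> (B - A))"

lemma segment_coord_on_line:
  assumes "A \<noteq> B"
  shows "segment_coord A B (A + m *\<^sub>R (B - A)) = m"
  using assms by (simp add: segment_coord_def)

lemma closed_segment_segment_coord:
  assumes "A \<noteq> B" "x \<in> closed_segment A B"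
  shows "x = A + segment_coord A B x *\<^sub>R (B - A)" "segment_coord A B x \<in> {0..1}"
proof -
  obtain m where "m \<in> {0..1}" "x = (1 - m) *\<^sub>R A + m *\<^sub>R B"
    using assms(2) unfolding closed_segment_def by auto
  moreover from this have x: "x = A + m *\<^sub>R (B - A)"
    by (simp add: algebra_simps)
  ultimately show "x = A + segment_coord A B x *\<^sub>R (B - A)" "segment_coord A B x \<in> {0..1}"
    unfolding x segment_coord_on_line[OF assms(1)] by simp_all
qed

context
  fixes \<alpha> :: "real \<Rightarrow> 'a::euclidean_space"
  assumes arc: "arc \<alpha>" and onto_segment: "path_image \<alpha> = closed_segment (\<alpha> 0) (\<alpha> 1)"
begin

lemma arc_segment_ends_distinct: "\<alpha> 0 \<noteq> \<alpha> 1"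
  using arc_distinct_ends[OF arc] by (simp add: pathstart_def pathfinish_def)

lemma arc_segment_coord:
  assumes "t \<in> {0..1}"
  shows "\<alpha> t = \<alpha> 0 + segment_coord (\<alpha> 0) (\<alpha> 1) (\<alpha> t) *\<^sub>R (\<alpha> 1 - \<alpha> 0)"
    and "segment_coord (\<alpha> 0) (\<alpha> 1) (\<alpha> t) \<in> {0..1}"
proof -
  have "\<alpha> t \<in> closed_segment (\<alpha> 0) (\<alpha> 1)"
    using assms onto_segment by (auto simp: path_image_def)
  then show "\<alpha> t = \<alpha> 0 + segment_coord (\<alpha> 0) (\<alpha> 1) (\<alpha> t) *\<^sub>R (\<alpha> 1 - \<alpha> 0)"
    and "segment_coord (\<alpha> 0) (\<alpha> 1) (\<alpha> t) \<in> {0..1}"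
    by (rule closed_segment_segment_coord[OF arc_segment_ends_distinct])+
qed

lemma arc_segment_coord_strict_mono: "strict_mono_on {0..1} (\<lambda>t. segment_coord (\<alpha> 0) (\<alpha> 1) (\<alpha> t))"
proof -
  define coord where "coord t = segment_coord (\<alpha> 0) (\<alpha> 1) (\<alpha> t)" for t
  have "continuous_on {0..1} \<alpha>"
    using arc by (simp add: arc_def path_def)
  then have cont: "continuous_on {0..1} coord"
    unfolding coord_def segment_coord_def by (intro continuous_intros) (use arc_segment_ends_distinct in auto)
  have inj: "inj_on coord {0..1}"
  proof (rule inj_onI)
    fix s t assume "s \<in> {0..1}" "t \<in> {0..1}" "coord s = coord t"
    then have "\<alpha> s = \<alpha> t"
      using arc_segment_coord(1) unfolding coord_def by metis
    then show "s = t"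
      using arc \<open>s \<in> {0..1}\<close> \<open>t \<in> {0..1}\<close> by (auto simp: arc_def dest: inj_onD)
  qed
  have "coord 0 = 0"
    by (simp add: coord_def segment_coord_def)
  show ?thesis
    unfolding coord_def[symmetric]
  proof (rule strict_mono_onI)
    fix r s :: real assume r: "r \<in> {0..1}" and s: "s \<in> {0..1}" and "r < s"
    \<comment> \<open>injective and continuous, hence monotone; increasing since \<open>coord 0 = 0\<close> is the minimum\<close>
    have "0 \<le> coord r"
      using arc_segment_coord(2)[OF r] by (simp add: coord_def)
    show "coord r < coord s"
    proof (cases "r = 0")
      case True
      have "coord s \<noteq> coord 0"
        using inj_onD[OF inj] s \<open>r < s\<close> True by fastforce
      then show ?thesis
        using arc_segment_coord(2)[OF s] True \<open>coord 0 = 0\<close> by (simp add: coord_def)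
    next
      case False
      have "continuous_on {0..s} coord" "inj_on coord {0..s}"
        using cont inj s by (auto intro: continuous_on_subset inj_on_subset)
      then show ?thesis
        using continuous_inj_imp_mono[of 0 r s coord] r \<open>r < s\<close> False \<open>0 \<le> coord r\<close> \<open>coord 0 = 0\<close> by auto
    qed
  qed
qed

lemma g_PQ_arc_monotone:
  assumes "distinct_parallel_hyperplanes P Q"
  shows "mono_on {0..1} (\<lambda>t. g_PQ P Q (\<alpha> t)) \<or> antimono_on {0..1} (\<lambda>t. g_PQ P Q (\<alpha> t))"
proof -
  define F where "F m = g_PQ P Q (\<alpha> 0 + m *\<^sub>R (\<alpha> 1 - \<alpha> 0))" for m
  have along: "g_PQ P Q (\<alpha> t) = F (segment_coord (\<alpha> 0) (\<alpha> 1) (\<alpha> t))" if "t \<in> {0..1}" for t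
    using arc_segment_coord(1)[OF that] unfolding F_def by metis
  have coord_le: "segment_coord (\<alpha> 0) (\<alpha> 1) (\<alpha> r) \<le> segment_coord (\<alpha> 0) (\<alpha> 1) (\<alpha> s)"
    if "r \<in> {0..1}" "s \<in> {0..1}" "r \<le> s" for r s
    using strict_mono_on_leD[OF arc_segment_coord_strict_mono that] .
  from g_PQ_monotone_on_line[OF assms] consider "mono F" | "antimono F"
    unfolding F_def by blast
  then show ?thesis
  proof cases
    case 1
    then have "mono_on {0..1} (\<lambda>t. g_PQ P Q (\<alpha> t))"
      by (intro mono_onI) (simp add: along coord_le monoD)
    then show ?thesis ..
  next
    case 2
    then have "antimono_on {0..1} (\<lambda>t. g_PQ P Q (\<alpha> t))"
      by (intro monotone_onI) (simp add: along coord_le antimonoD)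
    then show ?thesis ..
  qed
qed

lemma oscillation_arc_le:
  assumes "distinct_parallel_hyperplanes P Q"
  shows "oscillation \<alpha> 0 1 P Q \<le> ereal (max 0 (- (g_PQ P Q (\<alpha> 0) * g_PQ P Q (\<alpha> 1))))"
  by (rule oscillation_le_if_monotone[OF g_PQ_arc_monotone[OF assms]])

lemma oscillation_arc_le_path:
  assumes "distinct_parallel_hyperplanes P Q" "\<beta> 0 = \<alpha> 0" "\<beta> 1 = \<alpha> 1"
  shows "oscillation \<alpha> 0 1 P Q \<le> oscillation \<beta> 0 1 P Q"
  using oscillation_arc_le[OF assms(1)] oscillation_ge_endpoints[of P Q \<beta>] assms(2,3)
  by (metis order_trans)

lemma oscillation_arc_less_if_leaves_segment:
  assumes "\<beta> 0 = \<alpha> 0" "\<beta> 1 = \<alpha> 1" "s \<in> {0..1}" "\<beta> s \<notin> path_image \<alpha>"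
  obtains P Q where "distinct_parallel_hyperplanes P Q" "oscillation \<alpha> 0 1 P Q < oscillation \<beta> 0 1 P Q"
proof -
  obtain P Q where PQ: "distinct_parallel_hyperplanes P Q"
    and on_arc: "\<And>x. x \<in> path_image \<alpha> \<Longrightarrow> g_PQ P Q x = -1" and off: "g_PQ P Q (\<beta> s) = 1"
    using exists_hyperplanes_separating_point[of "path_image \<alpha>" "\<beta> s"] assms(4) onto_segment by auto
  have ends: "g_PQ P Q (\<alpha> 0) = -1" "g_PQ P Q (\<alpha> 1) = -1"
    using on_arc pathstart_in_path_image pathfinish_in_path_image
    unfolding pathstart_def pathfinish_def by blast+
  have "oscillation \<alpha> 0 1 P Q \<le> 0"
    using oscillation_arc_le[OF PQ] ends by (simp add: zero_ereal_def)
  also have "\<dots> < 1"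
    by simp
  also have "\<dots> \<le> oscillation \<beta> 0 1 P Q"
    using oscillation_ge_two_points[of 0 s P Q \<beta>] assms ends off by (simp add: one_ereal_def)
  finally show thesis
    using that PQ by blast
qed

lemma oscillation_arc_less_if_backtracks:
  assumes "\<beta> 0 = \<alpha> 0" "\<beta> 1 = \<alpha> 1" "0 \<le> s" "s \<le> u" "u \<le> 1"
    and "\<beta> s \<in> path_image \<alpha>" "\<beta> u \<in> path_image \<alpha>"
    and "segment_coord (\<alpha> 0) (\<alpha> 1) (\<beta> u) < segment_coord (\<alpha> 0) (\<alpha> 1) (\<beta> s)"
  obtains P Q where "distinct_parallel_hyperplanes P Q" "oscillation \<alpha> 0 1 P Q < oscillation \<beta> 0 1 P Q"
proof -
  let ?A = "\<alpha> 0" and ?D = "\<alpha> 1 - \<alpha> 0"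
  define x where "x = segment_coord (\<alpha> 0) (\<alpha> 1) (\<beta> s)"
  define y where "y = segment_coord (\<alpha> 0) (\<alpha> 1) (\<beta> u)"
  have coords: "\<beta> s = ?A + x *\<^sub>R ?D" "\<beta> u = ?A + y *\<^sub>R ?D" "0 \<le> y" "x \<le> 1"
    using closed_segment_segment_coord[OF arc_segment_ends_distinct] assms(6,7) onto_segment
    unfolding x_def y_def by auto
  obtain P Q where PQ: "distinct_parallel_hyperplanes P Q"
    and below: "\<And>m. m \<le> y \<Longrightarrow> g_PQ P Q (?A + m *\<^sub>R ?D) = -1"
    and above: "\<And>m. x \<le> m \<Longrightarrow> g_PQ P Q (?A + m *\<^sub>R ?D) = 1"
    using exists_hyperplanes_separating_on_line[of ?D y x ?A] arc_segment_ends_distinct assms(8)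
    unfolding x_def y_def by auto
  have signs: "g_PQ P Q (\<alpha> 0) = -1" "g_PQ P Q (\<alpha> 1) = 1"
    "g_PQ P Q (\<beta> s) = 1" "g_PQ P Q (\<beta> u) = -1"
    using below[of 0] above[of 1] above[of x] below[of y] coords by simp_all
  have "oscillation \<alpha> 0 1 P Q \<le> 1"
    using oscillation_arc_le[OF PQ] signs by (simp add: one_ereal_def)
  also have "\<dots> < 3"
    by simp
  also have "\<dots> \<le> oscillation \<beta> 0 1 P Q"
    using oscillation_ge_four_points[of 0 s u 1 P Q \<beta>] assms signs by (simp add: numeral_eq_ereal)
  finally show thesis
    using that PQ by blast
qed

lemma reparametrization_of_arc:
  assumes "path \<beta>" "path_image \<beta> \<subseteq> path_image \<alpha>" "\<beta> 0 = \<alpha> 0" "\<beta> 1 = \<alpha> 1"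
    and mono: "mono_on {0..1} (\<lambda>s. segment_coord (\<alpha> 0) (\<alpha> 1) (\<beta> s))"
  shows "reparametrization_of \<beta> \<alpha>"
proof -
  have inj: "inj_on \<alpha> {0..1}" and "continuous_on {0..1} \<alpha>"
    using arc by (auto simp: arc_def path_def)
  have on_arc: "\<beta> s \<in> \<alpha> ` {0..1}" if "s \<in> {0..1}" for s
    using assms(2) that by (auto simp: path_image_def)
  define \<phi> where "\<phi> s = inv_into {0..1} \<alpha> (\<beta> s)" for s
  have \<phi>_in: "\<phi> s \<in> {0..1}" if "s \<in> {0..1}" for s
    unfolding \<phi>_def by (rule inv_into_into[OF on_arc[OF that]])
  have \<alpha>_\<phi>: "\<alpha> (\<phi> s) = \<beta> s" if "s \<in> {0..1}" for s
    unfolding \<phi>_def by (rule f_inv_into_f[OF on_arc[OF that]])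
  have "continuous_on (\<alpha> ` {0..1}) (inv_into {0..1} \<alpha>)"
    by (rule continuous_on_inv[OF \<open>continuous_on {0..1} \<alpha>\<close> compact_Icc]) (simp add: inj)
  then have "continuous_on {0..1} \<phi>"
    unfolding \<phi>_def by (rule continuous_on_compose2) (use assms(1) on_arc in \<open>auto simp: path_def\<close>)
  moreover have "mono_on {0..1} \<phi>"
  proof (rule mono_onI)
    fix r s :: real assume r: "r \<in> {0..1}" and s: "s \<in> {0..1}" and "r \<le> s"
    show "\<phi> r \<le> \<phi> s"
    proof (rule ccontr)
      assume "\<not> \<phi> r \<le> \<phi> s"
      then have "segment_coord (\<alpha> 0) (\<alpha> 1) (\<beta> s) < segment_coord (\<alpha> 0) (\<alpha> 1) (\<beta> r)"
        using strict_mono_onD[OF arc_segment_coord_strict_mono \<phi>_in[OF s] \<phi>_in[OF r]] \<alpha>_\<phi> r s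
        by simp
      then show False
        using mono_onD[OF mono r s \<open>r \<le> s\<close>] by simp
    qed
  qed
  moreover have "\<phi> 0 = 0" "\<phi> 1 = 1"
    using inj assms(3,4) by (simp_all add: \<phi>_def)
  ultimately show ?thesis
    unfolding reparametrization_of_def using \<phi>_in \<alpha>_\<phi> by (intro exI[of _ \<phi>]) auto
qed

end

theorem lemma3p4:
  fixes X :: "'a::euclidean_space set" and \<alpha> \<beta> :: "real \<Rightarrow> 'a"
  assumes "arc \<alpha>" and "path_image \<alpha> = closed_segment (\<alpha> 0) (\<alpha> 1)"
    and "path_image \<alpha> \<subseteq> X"
    and "path \<beta>" and "path_image \<beta> \<subseteq> X"
    and "\<beta> 0 = \<alpha> 0" and "\<beta> 1 = \<alpha> 1"
  shows "(\<forall>P Q. distinct_parallel_hyperplanes P Q \<longrightarrow>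
            oscillation \<alpha> 0 1 P Q \<le> oscillation \<beta> 0 1 P Q)
       \<and> (\<not> reparametrization_of \<beta> \<alpha> \<longrightarrow>
            (\<exists>P Q. distinct_parallel_hyperplanes P Q \<and>
                   oscillation \<alpha> 0 1 P Q < oscillation \<beta> 0 1 P Q))"
proof (intro conjI allI impI)
  note arc = assms(1,2) and ends = assms(6,7)
  show "oscillation \<alpha> 0 1 P Q \<le> oscillation \<beta> 0 1 P Q" if "distinct_parallel_hyperplanes P Q" for P Q
    using oscillation_arc_le_path[OF arc that ends] .
  assume not_reparam: "\<not> reparametrization_of \<beta> \<alpha>"
  show "\<exists>P Q. distinct_parallel_hyperplanes P Q \<and> oscillation \<alpha> 0 1 P Q < oscillation \<beta> 0 1 P Q"
  proof (cases "path_image \<beta> \<subseteq> path_image \<alpha>")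
    case False
    then obtain s where "s \<in> {0..1}" "\<beta> s \<notin> path_image \<alpha>"
      unfolding path_image_def by blast
    then show ?thesis
      using oscillation_arc_less_if_leaves_segment[OF arc ends] by metis
  next
    case True
    then have "\<not> mono_on {0..1} (\<lambda>s. segment_coord (\<alpha> 0) (\<alpha> 1) (\<beta> s))"
      using reparametrization_of_arc[OF arc assms(4) _ ends] not_reparam by blast
    then obtain s u where "s \<in> {0..1}" "u \<in> {0..1}" "s \<le> u"
      and "segment_coord (\<alpha> 0) (\<alpha> 1) (\<beta> u) < segment_coord (\<alpha> 0) (\<alpha> 1) (\<beta> s)"
      by (auto simp: monotone_on_def not_le)
    moreover have "\<beta> s \<in> path_image \<alpha>" "\<beta> u \<in> path_image \<alpha>"
      using True \<open>s \<in> {0..1}\<close> \<open>u \<in> {0..1}\<close> by (auto simp: path_image_def)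
    ultimately show ?thesis
      using oscillation_arc_less_if_backtracks[OF arc ends] by (metis atLeastAtMost_iff)
  qed
qed

end
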